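(* Let $0<\mu\le L$, $f\in\mathcal S^1_{\mu,L}(\mathbb R^n)$ with minimizer $x^*$, $\beta\in[0,1]$, and $s>0$ with $\mu s<1$. Let $(x_k)$, $(v_k)$ and $\mathcal E_\beta(k)$ be as in the context. Then for every $k\ge0$, $$\mathcal E_\beta(k)\le\left(\frac{1}{1-\sqrt{\mu s}}+\frac{\beta^2Ls}{2}\right)\big(f(x_k)-f(x^* )\big)+\frac{1+\sqrt{\mu s}+\mu s}{(1-\sqrt{\mu s})^2}\|v_k\|^2+\frac{3\mu}{(1-\sqrt{\mu s})^2}\|x_k-x^*\|^2$$ $$\qquad+\frac{\sqrt{\mu s}}{1-\sqrt{\mu s}}\left[f(x_k)-f(x^* )-\frac{\beta^2s\sqrt{\mu s}-(\beta^2-\beta)s}{2\sqrt{\mu s}}\|\nabla f(x_k)\|^2\right].$$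
   Context: $\mathcal S^1_{\mu,L}(\mathbb R^n)$: differentiable, $\mu$-strongly convex $f:\mathbb R^n\to\mathbb R$ (i.e. $f(y)\ge f(x)+\langle\nabla f(x),y-x\rangle+\frac\mu2\|y-x\|^2$) with $L$-Lipschitz gradient. The sequence: $x_0\in\mathbb R^n$, $x_1=x_0-\frac{2s\nabla f(x_0)}{1+\sqrt{\mu s}}$, and for $k\ge1$, $x_{k+1}=x_k+\frac{1-\sqrt{\mu s}}{1+\sqrt{\mu s}}(x_k-x_{k-1})-s\nabla f(x_k)-\beta\frac{1-\sqrt{\mu s}}{1+\sqrt{\mu s}}s(\nabla f(x_k)-\nabla f(x_{k-1}))$. Velocities $v_k=\frac{x_{k+1}-x_k}{\sqrt s}$. Discrete energy: $$\mathcal E_\beta(k)=\frac{1+\sqrt{\mu s}}{1-\sqrt{\mu s}}\big(f(x_k)-f(x^* )\big)+\frac14\|v_k\|^2+\frac14\Big\|v_k+\frac{2\sqrt\mu}{1-\sqrt{\mu s}}(x_k-x^* )+\beta\sqrt s\,\nabla f(x_k)\Big\|^2-\frac{\beta s\|\nabla f(x_k)\|^2}{2(1-\sqrt{\mu s})}.$$ *)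

theory Defs
  imports "HOL-Analysis.Analysis"
begin

definition vel :: "real \<Rightarrow> (nat \<Rightarrow> 'a::real_vector) \<Rightarrow> nat \<Rightarrow> 'a" where
  "vel s x k = (1 / sqrt s) *\<^sub>R (x (Suc k) - x k)"

definition energy ::
  "('a::real_inner \<Rightarrow> real) \<Rightarrow> ('a \<Rightarrow> 'a) \<Rightarrow> real \<Rightarrow> real \<Rightarrow> real \<Rightarrow> 'a \<Rightarrow> (nat \<Rightarrow> 'a) \<Rightarrow> nat \<Rightarrow> real"
  where
  "energy f g \<mu> s \<beta> xs x k =
     (1 + sqrt (\<mu> * s)) / (1 - sqrt (\<mu> * s)) * (f (x k) - f xs)
     + 1/4 * (norm (vel s x k))^2
     + 1/4 * (norm (vel s x k + (2 * sqrt \<mu> / (1 - sqrt (\<mu> * s))) *\<^sub>R (x k - xs)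
                    + (\<beta> * sqrt s) *\<^sub>R g (x k)))^2
     - \<beta> * s * (norm (g (x k)))^2 / (2 * (1 - sqrt (\<mu> * s)))"

end

theory Submission imports Defs begin

lemma lipschitz_gradient_upper_bound:
  fixes f :: "'a::real_inner \<Rightarrow> real" and g :: "'a \<Rightarrow> 'a"
  assumes grad: "\<And>y. (f has_derivative (\<lambda>h. g y \<bullet> h)) (at y)"
    and lipschitz: "\<And>y z. norm (g y - g z) \<le> L * norm (y - z)"
  shows "f (x + h) \<le> f x + g x \<bullet> h + L / 2 * (norm h)^2"
proof -
  define \<phi> where "\<phi> t = f (x + t *\<^sub>R h) - t * (g x \<bullet> h) - L / 2 * t^2 * (norm h)^2" for t
  have \<phi>_deriv:
    "(\<phi> has_real_derivative ((g (x + t *\<^sub>R h) - g x) \<bullet> h - L * t * (norm h)^2)) (at t)" for t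
  proof -
    have "((\<lambda>t. x + t *\<^sub>R h) has_derivative (\<lambda>d. d *\<^sub>R h)) (at t)"
      by (auto intro!: derivative_eq_intros)
    from has_derivative_compose[OF this grad]
    have "((\<lambda>t. f (x + t *\<^sub>R h)) has_real_derivative (g (x + t *\<^sub>R h) \<bullet> h)) (at t)"
      by (simp add: o_def has_field_derivative_def mult.commute[of _ "g (x + t *\<^sub>R h) \<bullet> h"])
    then show ?thesis
      unfolding \<phi>_def by (auto intro!: derivative_eq_intros simp: inner_diff_left)
  qed
  have "\<phi> 1 \<le> \<phi> 0"
  proof (rule DERIV_nonpos_imp_nonincreasing[of 0 1 \<phi>])
    fix t :: real assume t: "0 \<le> t" "t \<le> 1"
    have "(g (x + t *\<^sub>R h) - g x) \<bullet> h \<le> norm (g (x + t *\<^sub>R h) - g x) * norm h"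
      by (rule norm_cauchy_schwarz)
    also have "\<dots> \<le> L * norm (t *\<^sub>R h) * norm h"
      using lipschitz[of "x + t *\<^sub>R h" x] by (simp add: mult_right_mono)
    also have "\<dots> = L * t * (norm h)^2"
      using t by (simp add: power2_eq_square)
    finally show "\<exists>y. (\<phi> has_real_derivative y) (at t) \<and> y \<le> 0"
      using \<phi>_deriv by force
  qed simp
  then show ?thesis
    unfolding \<phi>_def by simp
qed

lemma norm_gradient_power2_le_gap:
  fixes f :: "'a::real_inner \<Rightarrow> real" and g :: "'a \<Rightarrow> 'a"
  assumes grad: "\<And>y. (f has_derivative (\<lambda>h. g y \<bullet> h)) (at y)"
    and lipschitz: "\<And>y z. norm (g y - g z) \<le> L * norm (y - z)"
    and minimizer: "\<And>y. f xs \<le> f y" and L_pos: "0 < L"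
  shows "(norm (g x))^2 \<le> 2 * L * (f x - f xs)"
proof -
  have "f xs \<le> f (x + (- 1 / L) *\<^sub>R g x)"
    by (rule minimizer)
  also have "\<dots> \<le> f x + g x \<bullet> ((- 1 / L) *\<^sub>R g x) + L / 2 * (norm ((- 1 / L) *\<^sub>R g x))^2"
    by (rule lipschitz_gradient_upper_bound[OF grad lipschitz])
  also have "\<dots> = f x - (norm (g x))^2 / (2 * L)"
    using L_pos by (simp add: power2_norm_eq_inner[symmetric] field_simps power2_eq_square)
  finally show ?thesis
    using L_pos by (simp add: field_simps)
qed

lemma norm_add3_power2_le:
  fixes a b c :: "'a::real_normed_vector"
  shows "(norm (a + b + c))^2 \<le> 3 * ((norm a)^2 + (norm b)^2 + (norm c)^2)"
proof -
  have "norm (a + b + c) \<le> norm a + norm b + norm c"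
    by (metis add_right_mono norm_triangle_ineq order_trans)
  then have "(norm (a + b + c))^2 \<le> (norm a + norm b + norm c)^2"
    by (simp add: power_mono)
  also have "\<dots> = 3 * ((norm a)^2 + (norm b)^2 + (norm c)^2)
      - ((norm a - norm b)^2 + (norm b - norm c)^2 + (norm a - norm c)^2)"
    by (simp add: power2_eq_square algebra_simps)
  also have "\<dots> \<le> 3 * ((norm a)^2 + (norm b)^2 + (norm c)^2)"
    by (smt (verit) zero_le_power2)
  finally show ?thesis .
qed

lemma energy_le:
  fixes f :: "'a::real_inner \<Rightarrow> real" and g :: "'a \<Rightarrow> 'a"
    and \<mu> L s \<beta> :: real and xs :: 'a and x :: "nat \<Rightarrow> 'a"
  assumes grad: "\<And>y. (f has_derivative (\<lambda>h. g y \<bullet> h)) (at y)"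
    and lipschitz: "\<And>y z. norm (g y - g z) \<le> L * norm (y - z)"
    and minimizer: "\<And>y. f xs \<le> f y"
    and mu_pos: "0 < \<mu>" and mu_le_L: "\<mu> \<le> L" and s_pos: "0 < s" and mus: "\<mu> * s < 1"
  shows "energy f g \<mu> s \<beta> xs x k \<le>
      (1 / (1 - sqrt (\<mu> * s)) + \<beta>^2 * L * s / 2) * (f (x k) - f xs)
    + (1 + sqrt (\<mu> * s) + \<mu> * s) / (1 - sqrt (\<mu> * s))^2 * (norm (vel s x k))^2
    + 3 * \<mu> / (1 - sqrt (\<mu> * s))^2 * (norm (x k - xs))^2
    + sqrt (\<mu> * s) / (1 - sqrt (\<mu> * s)) *
        (f (x k) - f xs
         - (\<beta>^2 * s * sqrt (\<mu> * s) - (\<beta>^2 - \<beta>) * s) / (2 * sqrt (\<mu> * s))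
           * (norm (g (x k)))^2)"
    (is "?E \<le> ?R")
proof -
  define r where "r = sqrt (\<mu> * s)"
  define F where "F = f (x k) - f xs"
  define V where "V = (norm (vel s x k))^2"
  define D where "D = (norm (x k - xs))^2"
  define \<Gamma> where "\<Gamma> = (norm (g (x k)))^2"
  define N where "N = (norm (vel s x k + (2 * sqrt \<mu> / (1 - r)) *\<^sub>R (x k - xs)
                        + (\<beta> * sqrt s) *\<^sub>R g (x k)))^2"
  have r: "0 < r" "r < 1" "\<mu> * s = r^2"
    using mu_pos s_pos mus by (auto simp: r_def)
  have V_nonneg: "0 \<le> V"
    by (simp add: V_def)
  have gap: "\<Gamma> \<le> 2 * L * F"
    unfolding \<Gamma>_def F_def using mu_pos mu_le_L
    by (intro norm_gradient_power2_le_gap[OF grad lipschitz minimizer]) simp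
  have mixed: "N \<le> 3 * V + 12 * \<mu> / (1 - r)^2 * D + 3 * \<beta>^2 * s * \<Gamma>"
    using norm_add3_power2_le[of "vel s x k" "(2 * sqrt \<mu> / (1 - r)) *\<^sub>R (x k - xs)"
        "(\<beta> * sqrt s) *\<^sub>R g (x k)"] mu_pos s_pos
    by (simp add: N_def V_def D_def \<Gamma>_def power_mult_distrib power_divide)
  have "(1 - r)^2 \<le> 1 + r + r^2"
    using r by (simp add: power2_eq_square algebra_simps)
  then have vel_coeff: "1 \<le> (1 + r + r^2) / (1 - r)^2"
    using r by simp
  have E_eq: "?E = (1 + r) / (1 - r) * F + V / 4 + N / 4 - \<beta> * s * \<Gamma> / (2 * (1 - r))"
    by (simp add: energy_def r_def F_def V_def \<Gamma>_def N_def)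
  have R_eq: "?R = (1 / (1 - r) + \<beta>^2 * L * s / 2) * F + (1 + r + r^2) / (1 - r)^2 * V
      + 3 * \<mu> / (1 - r)^2 * D + r / (1 - r) * (F - (\<beta>^2 * s * r - (\<beta>^2 - \<beta>) * s) / (2 * r) * \<Gamma>)"
    unfolding r(3)[symmetric] by (simp add: r_def F_def V_def D_def \<Gamma>_def)
  have "?R - ?E = \<beta>^2 * s / 4 * (2 * L * F - \<Gamma>) + ((1 + r + r^2) / (1 - r)^2 - 1) * V
      + (3 * V + 12 * \<mu> / (1 - r)^2 * D + 3 * \<beta>^2 * s * \<Gamma> - N) / 4"
    unfolding E_eq R_eq using r(1,2) by (simp add: divide_simps) algebra
  also have "\<dots> \<ge> 0"
    using gap mixed vel_coeff V_nonneg s_pos by (intro add_nonneg_nonneg) auto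
  finally show ?thesis
    by simp
qed

theorem lemma5p1:
  fixes f :: "real ^ 'n \<Rightarrow> real" and g :: "real ^ 'n \<Rightarrow> real ^ 'n"
    and \<mu> L s \<beta> :: real and xs :: "real ^ 'n" and x :: "nat \<Rightarrow> real ^ 'n"
  assumes mu_pos: "0 < \<mu>" and mu_le_L: "\<mu> \<le> L"
    and grad: "\<And>y. (f has_derivative (\<lambda>h. g y \<bullet> h)) (at y)"
    and strong_convex: "\<And>y z. f z \<ge> f y + g y \<bullet> (z - y) + \<mu> / 2 * (norm (z - y))^2"
    and lipschitz: "\<And>y z. norm (g y - g z) \<le> L * norm (y - z)"
    and minimizer: "\<And>y. f xs \<le> f y"
    and beta: "0 \<le> \<beta>" "\<beta> \<le> 1"
    and s_pos: "0 < s" and mus: "\<mu> * s < 1"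
    and x1: "x 1 = x 0 - (2 * s / (1 + sqrt (\<mu> * s))) *\<^sub>R g (x 0)"
    and xrec: "\<And>k. k \<ge> 1 \<Longrightarrow> x (Suc k) = x k
        + ((1 - sqrt (\<mu> * s)) / (1 + sqrt (\<mu> * s))) *\<^sub>R (x k - x (k - 1))
        - s *\<^sub>R g (x k)
        - (\<beta> * ((1 - sqrt (\<mu> * s)) / (1 + sqrt (\<mu> * s))) * s) *\<^sub>R (g (x k) - g (x (k - 1)))"
  shows "energy f g \<mu> s \<beta> xs x k \<le>
      (1 / (1 - sqrt (\<mu> * s)) + \<beta>^2 * L * s / 2) * (f (x k) - f xs)
    + (1 + sqrt (\<mu> * s) + \<mu> * s) / (1 - sqrt (\<mu> * s))^2 * (norm (vel s x k))^2
    + 3 * \<mu> / (1 - sqrt (\<mu> * s))^2 * (norm (x k - xs))^2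
    + sqrt (\<mu> * s) / (1 - sqrt (\<mu> * s)) *
        (f (x k) - f xs
         - (\<beta>^2 * s * sqrt (\<mu> * s) - (\<beta>^2 - \<beta>) * s) / (2 * sqrt (\<mu> * s))
           * (norm (g (x k)))^2)"
  by (rule energy_le[OF grad lipschitz minimizer mu_pos mu_le_L s_pos mus])

end
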